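(* Let $\nu$ be a charge on $\mathbb{C}$ satisfying the Blaschke condition near infinity in the upper half-plane, i.e. $$\int_{\mathbb{C}^{\mathrm{up}}\setminus D(r_0)} \operatorname{Im}\frac{1}{\bar z}\, d|\nu|(z)<+\infty\quad\text{for some } r_0>0,$$ and let $\nu^{\overline{\mathrm{up}}}:=\nu|_{\{\operatorname{Im} z\ge 0\}}$ be the restriction of $\nu$ to the closed upper half-plane. Then the balayage $\nu^{\mathrm{bal}}$ of $\nu$ from $\mathbb{C}^{\mathrm{up}}$ is well defined (the defining integral converges absolutely for every bounded Borel set, so $\nu^{\mathrm{bal}}$ is a charge on $\mathbb{C}$), and for all real numbers $-\infty<t_1<t_2<+\infty$ with $t_1t_2\ge 0$, with $x_0:=\frac{t_1+t_2}{2}$, $r:=\frac{t_2-t_1}{2}$, and every $a\in(0,1)$, \begin{multline*} 0\le |\nu^{\mathrm{bal}}|^{\mathbb{R}}(t_2)-|\nu^{\mathrm{bal}}|^{\mathbb{R}}(t_1)\le |\nu^{\overline{\mathrm{up}}}|\bigl(\overline D(x_0,r)\bigr)+\frac{2r}{a|x_0|}\,|\nu^{\overline{\mathrm{up}}}|\Bigl(\overline D\bigl(0,\tfrac{3}{a}|x_0|\bigr)\Bigr)\\ +\frac{r}{(1-a)^2}\int_{|z|\ge |x_0|}\Bigl|\operatorname{Im}\frac1z\Bigr|\,d|\nu^{\overline{\mathrm{up}}}|(z)+r\Bigl(\int_r^{a|x_0|}\frac{|\nu^{\overline{\mathrm{up}}}|(\overline D(x_0,t))}{t^2}\,dt\Bigr)^+,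 \end{multline*} where $x^+=\max\{x,0\}$ and $\int_r^{s}=-\int_s^r$ if $s<r$.
   Context: A charge on a Borel set $S\subset\mathbb{C}$ is a countably additive function on Borel subsets of $S$ with values in $[-\infty,+\infty]$ that is finite on compact subsets; $|\nu|$ denotes its total variation. $D(z,r)$ is the open disc and $\overline D(z,r)$ the closed disc of centre $z$ and radius $r$, $D(r)=D(0,r)$. $\mathbb{C}^{\mathrm{up}}=\{\operatorname{Im}z>0\}$, $\mathbb{C}_{\overline{\mathrm{lw}}}=\{\operatorname{Im}z\le 0\}$. For $z\in\mathbb{C}^{\mathrm{up}}$ and Borel $B\subset\mathbb{C}$ the harmonic measure is $\omega(z,B)=\frac1\pi\int_{B\cap\mathbb{R}}\frac{\operatorname{Im}z}{(t-\operatorname{Re}z)^2+(\operatorname{Im}z)^2}\,dt$. The balayage of $\nu$ from $\mathbb{C}^{\mathrm{up}}$ is the set function $\nu^{\mathrm{bal}}(B):=\int_{\mathbb{C}^{\mathrm{up}}}\omega(z,B)\,d\nu(z)+\nu(B\cap\mathbb{C}_{\overline{\mathrm{lw}}})$ on Borel sets $B$. For a charge $\mu$ on $\mathbb{C}$, its distribution function on $\mathbb{R}$ is $\mu^{\mathbb{R}}(x)=\mu([0,x])$ for $x\ge0$ and $\mu^{\mathbb{R}}(x)=-\mu([x,0))$ for $x<0$. *)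

theory Defs
  imports "HOL-Analysis.Analysis"
begin

text \<open>A charge on the complex plane is represented through its Jordan decomposition:
  a pair of mutually singular Borel measures, both finite on compact sets.
  The charge is nu = nu_p - nu_n and its total variation is nu_p + nu_n.\<close>

definition charge_pair :: "complex measure \<Rightarrow> complex measure \<Rightarrow> bool" where
  "charge_pair np nn \<longleftrightarrow>
     sets np = sets borel \<and> sets nn = sets borel \<and>
     (\<forall>K. compact K \<longrightarrow> emeasure np K < \<infinity> \<and> emeasure nn K < \<infinity>) \<and>
     (\<exists>P \<in> sets borel. emeasure nn P = 0 \<and> emeasure np (UNIV - P) = 0)"

definition upper_open :: "complex set" where
  "upper_open = {z. Im z > 0}"

definition upper_closed :: "complex set" where
  "upper_closed = {z. Im z \<ge> 0}"

definition lower_closed :: "complex set" where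
  "lower_closed = {z. Im z \<le> 0}"

text \<open>Harmonic measure of the upper half-plane at z (Im z > 0) of a Borel set B.\<close>
definition harm :: "complex \<Rightarrow> complex set \<Rightarrow> real" where
  "harm z B = (1 / pi) *
     (LINT t : {t. complex_of_real t \<in> B} | lborel.
        Im z / ((t - Re z)\<^sup>2 + (Im z)\<^sup>2))"

definition tv_nu :: "complex measure \<Rightarrow> complex measure \<Rightarrow> complex set \<Rightarrow> ennreal" where
  "tv_nu np nn B = emeasure np B + emeasure nn B"

definition tv_up :: "complex measure \<Rightarrow> complex measure \<Rightarrow> complex set \<Rightarrow> ennreal" where
  "tv_up np nn B = tv_nu np nn (B \<inter> upper_closed)"

definition bal :: "complex measure \<Rightarrow> complex measure \<Rightarrow> complex set \<Rightarrow> real" where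
  "bal np nn B =
     (\<integral>z. indicator upper_open z * harm z B \<partial>np)
     - (\<integral>z. indicator upper_open z * harm z B \<partial>nn)
     + measure np (B \<inter> lower_closed) - measure nn (B \<inter> lower_closed)"

definition tv_setfun :: "(complex set \<Rightarrow> real) \<Rightarrow> complex set \<Rightarrow> ereal" where
  "tv_setfun f B =
     (SUP IP \<in> {(I, P). finite (I :: nat set) \<and> disjoint_family_on P I \<and>
                        (\<forall>i\<in>I. P i \<in> sets borel) \<and> (\<Union>i\<in>I. P i) = B}.
        ereal (\<Sum>i\<in>fst IP. \<bar>f (snd IP i)\<bar>))"

definition distR :: "(complex set \<Rightarrow> real) \<Rightarrow> real \<Rightarrow> real" where
  "distR mu x =
     (if x \<ge> 0 then mu (complex_of_real ` {0..x})
      else - mu (complex_of_real ` {x..<0}))"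

end

(* Far from the origin
   omega(z, [-R, R]) = O(R Im (1 / z)), so the Blaschke condition makes it finite on bounded sets, and
   monotone convergence gives countable additivity.  The balayage of the charge is the difference of
   the balayages U+ and U- of the two parts of its Jordan decomposition, so its total variation is
   dominated by U+ + U-, and the increment of its distribution function over [t1, t2] is at most
   (U+ + U-)(J) for some Borel set J in [t1, t2].  Finally pi omega(z, [x0 - r, x0 + r]) is the angle
   under which this segment is seen from z; bounding the angle by pi, by pi r / |z - x0| and, far away,
   by O(r Im (1 / z)) yields a pointwise majorant of omega(z, J) + 1_J(z) whose integral against the
   total variation of the charge is the right-hand side.  The term with N(t) / t^2 arises by Tonelli
   from 1 / |z - x0| - 1 / s, the integral of dt / t^2 over [|z - x0|, s]. *)

theory Submission
  imports Defs
begin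

section \<open>The angle subtended by a segment\<close>

(* The angle under which the segment [c - r, c + r] is seen from z; by poisson_mass_interval it is
   pi times the harmonic measure of the segment. *)
definition interval_angle :: "complex \<Rightarrow> real \<Rightarrow> real \<Rightarrow> real" where
  "interval_angle z c r = arctan ((c + r - Re z) / Im z) - arctan ((c - r - Re z) / Im z)"

lemma interval_angle_nonneg: "Im z > 0 \<Longrightarrow> 0 \<le> r \<Longrightarrow> 0 \<le> interval_angle z c r"
  by (simp add: interval_angle_def arctan_le_iff divide_right_mono)

lemma interval_angle_le_pi: "interval_angle z c r \<le> pi"
  using arctan_bounded[of "(c + r - Re z) / Im z"] arctan_bounded[of "(c - r - Re z) / Im z"]
  by (simp add: interval_angle_def)

lemma interval_angle_le_outside:
  assumes y: "Im z > 0" and r: "r > 0" and out: "r < cmod (z - of_real c)"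
  shows "interval_angle z c r < pi / 2"
    and "interval_angle z c r \<le> 2 * r * Im z / ((cmod (z - of_real c))\<^sup>2 - r\<^sup>2)"
proof -
  define A where "A = (c + r - Re z) / Im z"
  define B where "B = (c - r - Re z) / Im z"
  define \<theta> where "\<theta> = interval_angle z c r"
  have \<theta>: "\<theta> = arctan A - arctan B" by (simp add: \<theta>_def interval_angle_def A_def B_def)
  have \<rho>: "(cmod (z - of_real c))\<^sup>2 = (Re z - c)\<^sup>2 + (Im z)\<^sup>2" by (simp add: cmod_power2)
  have "r\<^sup>2 < (Re z - c)\<^sup>2 + (Im z)\<^sup>2" using out r by (simp flip: \<rho> add: power_strict_mono)
  moreover have AB: "1 + A * B = ((Re z - c)\<^sup>2 + (Im z)\<^sup>2 - r\<^sup>2) / (Im z)\<^sup>2"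
    using y by (simp add: A_def B_def field_simps power2_eq_square)
  ultimately have AB_pos: "1 + A * B > 0" using y by simp
  \<comment> \<open>\<open>cos \<theta> > 0\<close> together with \<open>0 \<le> \<theta> \<le> pi\<close> puts \<theta> into \<open>[0, pi/2)\<close>, where \<open>\<theta> \<le> tan \<theta>\<close>.\<close>
  have "cos \<theta> = (1 + A * B) / (sqrt (1 + A\<^sup>2) * sqrt (1 + B\<^sup>2))"
    by (simp add: \<theta> cos_diff cos_arctan sin_arctan add_divide_distrib)
  hence cos_pos: "cos \<theta> > 0" using AB_pos by (simp add: add_pos_nonneg)
  have "0 \<le> \<theta>" "\<theta> \<le> pi"
    using interval_angle_nonneg[OF y, of r c] r interval_angle_le_pi by (auto simp: \<theta>_def)
  show lt: "interval_angle z c r < pi / 2"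
  proof (rule ccontr)
    assume "\<not> ?thesis"
    hence "cos \<theta> \<le> cos (pi / 2)"
      using \<open>\<theta> \<le> pi\<close> by (intro cos_monotone_0_pi_le) (auto simp: \<theta>_def)
    thus False using cos_pos by simp
  qed
  have "tan \<theta> = (A - B) / (1 + A * B)"
    unfolding \<theta> by (subst tan_diff) (use cos_pos \<theta> in \<open>auto simp: cos_arctan_not_zero tan_arctan\<close>)
  also have "\<dots> = 2 * r * Im z / ((cmod (z - of_real c))\<^sup>2 - r\<^sup>2)"
    unfolding \<rho> using y by (simp add: A_def B_def field_simps power2_eq_square)
  finally have tan: "tan \<theta> = 2 * r * Im z / ((cmod (z - of_real c))\<^sup>2 - r\<^sup>2)" .
  have "\<theta> = arctan (tan \<theta>)" using \<open>0 \<le> \<theta>\<close> lt by (simp add: \<theta>_def arctan_tan)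
  also have "\<dots> \<le> tan \<theta>" using \<open>0 \<le> \<theta>\<close> lt by (intro arctan_le_self tan_pos_pi2_le) (auto simp: \<theta>_def)
  finally show "interval_angle z c r \<le> 2 * r * Im z / ((cmod (z - of_real c))\<^sup>2 - r\<^sup>2)"
    using tan unfolding \<theta>_def by simp
qed

lemma interval_angle_le_far:
  assumes y: "Im z > 0" and r: "r > 0" and far: "2 * r \<le> cmod (z - of_real c)"
  shows "interval_angle z c r \<le> 3 * r * Im z / (cmod (z - of_real c))\<^sup>2"
proof -
  define \<rho> where "\<rho> = cmod (z - of_real c)"
  have "(2 * r)\<^sup>2 \<le> \<rho>\<^sup>2" using far r by (intro power_mono) (auto simp: \<rho>_def)
  hence d: "3/4 * \<rho>\<^sup>2 \<le> \<rho>\<^sup>2 - r\<^sup>2" by (simp add: power_mult_distrib)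
  have "r < \<rho>" using far r unfolding \<rho>_def by linarith
  hence pos: "0 < 3/4 * \<rho>\<^sup>2" using r by simp
  have "interval_angle z c r \<le> 2 * r * Im z / (\<rho>\<^sup>2 - r\<^sup>2)"
    using interval_angle_le_outside(2)[OF y r] \<open>r < \<rho>\<close> by (simp add: \<rho>_def)
  also have "\<dots> \<le> 2 * r * Im z / (3/4 * \<rho>\<^sup>2)"
    using d pos y r by (intro divide_left_mono mult_pos_pos; (linarith | simp))
  also have "\<dots> = 8/3 * (r * Im z / \<rho>\<^sup>2)" using pos by (simp add: field_simps)
  also have "\<dots> \<le> 3 * (r * Im z / \<rho>\<^sup>2)" using y r by (intro mult_right_mono) auto
  finally show ?thesis by (simp add: \<rho>_def)
qed

lemma interval_angle_le_ratio:
  assumes y: "Im z > 0" and r: "r > 0" and out: "r < cmod (z - of_real c)"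
  shows "interval_angle z c r \<le> pi * r / cmod (z - of_real c)"
proof (cases "2 * r \<le> cmod (z - of_real c)")
  case True
  define \<rho> where "\<rho> = cmod (z - of_real c)"
  have "Im z \<le> \<rho>" using abs_Im_le_cmod[of "z - of_real c"] by (simp add: \<rho>_def)
  hence "3 * r * Im z / \<rho>\<^sup>2 \<le> 3 * r * \<rho> / \<rho>\<^sup>2"
    using r by (intro divide_right_mono mult_left_mono) auto
  also have "\<dots> = 3 * r / \<rho>" by (simp add: power2_eq_square)
  also have "\<dots> \<le> pi * r / \<rho>" using r out pi_gt3 by (simp add: \<rho>_def divide_right_mono)
  finally show ?thesis using interval_angle_le_far[OF y r True] by (simp add: \<rho>_def)
next
  case False
  have "pi / 2 = pi * r / (2 * r)" using r by simp
  also have "\<dots> \<le> pi * r / cmod (z - of_real c)"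
    using False out r by (intro divide_left_mono mult_pos_pos) auto
  finally show ?thesis using interval_angle_le_outside(1)[OF y r out] by linarith
qed

section \<open>Poisson integrals of sets of reals\<close>

definition poisson_kernel :: "complex \<Rightarrow> real \<Rightarrow> real" where
  "poisson_kernel z t = Im z / ((t - Re z)\<^sup>2 + (Im z)\<^sup>2)"

(* pi times harm z B, valued in ennreal so that monotonicity and countable additivity need no
   integrability side conditions. *)
definition poisson_mass :: "complex \<Rightarrow> complex set \<Rightarrow> ennreal" where
  "poisson_mass z B =
     (\<integral>\<^sup>+ t. ennreal (indicator (complex_of_real -` B) t * poisson_kernel z t) \<partial>lborel)"

lemma poisson_kernel_nonneg: "Im z \<ge> 0 \<Longrightarrow> poisson_kernel z t \<ge> 0"
  by (simp add: poisson_kernel_def)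

lemma borel_measurable_poisson_kernel [measurable]:
  "(\<lambda>(z, t). poisson_kernel z t) \<in> borel_measurable (borel \<Otimes>\<^sub>M lborel)"
  unfolding poisson_kernel_def by measurable

lemma vimage_of_real_borel [measurable]:
  "B \<in> sets borel \<Longrightarrow> complex_of_real -` B \<in> sets borel"
  using measurable_sets[of complex_of_real borel borel B] by (simp add: borel_measurable_continuous_onI)

lemma vimage_of_real_image [simp]: "complex_of_real -` (complex_of_real ` S) = S"
  by (rule inj_vimage_image_eq[OF inj_of_real])

lemma poisson_mass_mono:
  "Im z \<ge> 0 \<Longrightarrow> complex_of_real -` B \<subseteq> complex_of_real -` C \<Longrightarrow> poisson_mass z B \<le> poisson_mass z C"
  unfolding poisson_mass_def
  by (intro nn_integral_mono ennreal_leI mult_right_mono) (auto simp: indicator_def poisson_kernel_nonneg)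

lemma poisson_mass_interval:
  assumes y: "Im z > 0" and r: "0 \<le> r"
  shows "poisson_mass z (complex_of_real ` {c - r..c + r}) = ennreal (interval_angle z c r)"
proof -
  have "((\<lambda>t. arctan ((t - Re z) / Im z)) has_real_derivative poisson_kernel z t) (at t)" for t
  proof -
    have "((\<lambda>t. arctan ((t - Re z) / Im z))
            has_real_derivative (inverse (1 + ((t - Re z) / Im z)\<^sup>2) * (1 / Im z))) (at t)"
      using y by (auto intro!: derivative_eq_intros)
    thus ?thesis using y by (simp add: poisson_kernel_def field_simps power2_eq_square)
  qed
  hence "(poisson_kernel z has_integral interval_angle z c r) {c - r..c + r}"
    using r unfolding interval_angle_def
    by (intro fundamental_theorem_of_calculus)
       (auto intro: has_field_derivative_at_within
             simp: has_real_derivative_iff_has_vector_derivative[symmetric] diff_diff_eq2)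
  from nn_integral_has_integral_lebesgue[OF _ this] y show ?thesis
    by (simp add: poisson_mass_def poisson_kernel_nonneg)
qed

lemma borel_measurable_poisson_mass [measurable]:
  assumes "B \<in> sets borel"
  shows "(\<lambda>z. poisson_mass z B) \<in> borel_measurable borel"
proof -
  have [measurable]: "complex_of_real -` B \<in> sets lborel" using assms by simp
  show ?thesis
    unfolding poisson_mass_def by (rule lborel.borel_measurable_nn_integral) measurable
qed

lemma bounded_vimage_of_real:
  assumes "bounded B"
  obtains R where "R > 0" "complex_of_real -` B \<subseteq> {-R..R}"
proof -
  obtain R where R: "R > 0" "\<And>z. z \<in> B \<Longrightarrow> cmod z \<le> R" using assms by (meson bounded_pos)
  show ?thesis by (rule that[OF R(1)]) (auto simp: abs_le_iff dest!: R(2))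
qed

lemma poisson_mass_le_interval_angle:
  assumes y: "Im z > 0" and R: "R > 0" "complex_of_real -` B \<subseteq> {-R..R}"
  shows "poisson_mass z B \<le> ennreal (interval_angle z 0 R)"
proof -
  have "poisson_mass z B \<le> poisson_mass z (complex_of_real ` {0 - R..0 + R})"
    using y R by (intro poisson_mass_mono) auto
  also have "\<dots> = ennreal (interval_angle z 0 R)" using y R(1) by (intro poisson_mass_interval) auto
  finally show ?thesis .
qed

lemma poisson_mass_finite:
  assumes y: "Im z > 0" and B: "bounded B"
  shows "poisson_mass z B < \<infinity>"
proof -
  obtain R where "R > 0" "complex_of_real -` B \<subseteq> {-R..R}" using bounded_vimage_of_real[OF B] .
  from poisson_mass_le_interval_angle[OF y this] show ?thesis by (rule le_less_trans) simp
qed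

lemma poisson_mass_eq_harm:
  assumes y: "Im z > 0" and B: "B \<in> sets borel" "bounded B"
  shows "poisson_mass z B = ennreal (pi * harm z B)" and "harm z B \<ge> 0"
proof -
  have [measurable]: "complex_of_real -` B \<in> sets lborel" using B by simp
  have [measurable]: "poisson_kernel z \<in> borel_measurable lborel" unfolding poisson_kernel_def by measurable
  have nonneg: "0 \<le> indicator (complex_of_real -` B) t * poisson_kernel z t" for t
    using y by (simp add: poisson_kernel_nonneg)
  have "integrable lborel (\<lambda>t. indicator (complex_of_real -` B) t * poisson_kernel z t)"
    using poisson_mass_finite[OF y B(2)] nonneg by (intro integrableI_nonneg) (auto simp: poisson_mass_def)
  hence "poisson_mass z B = ennreal (\<integral>t. indicator (complex_of_real -` B) t * poisson_kernel z t \<partial>lborel)"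
    unfolding poisson_mass_def using nonneg by (intro nn_integral_eq_integral) auto
  moreover have "harm z B = (\<integral>t. indicator (complex_of_real -` B) t * poisson_kernel z t \<partial>lborel) / pi"
    by (simp add: harm_def set_lebesgue_integral_def vimage_def poisson_kernel_def)
  moreover have "(\<integral>t. indicator (complex_of_real -` B) t * poisson_kernel z t \<partial>lborel) \<ge> 0"
    using nonneg by (intro integral_nonneg_AE) auto
  ultimately show "poisson_mass z B = ennreal (pi * harm z B)" "harm z B \<ge> 0" by simp_all
qed

lemma poisson_mass_UN:
  assumes y: "Im z \<ge> 0" and A: "range A \<subseteq> sets borel" "disjoint_family A"
  shows "poisson_mass z (\<Union>n. A n) = (\<Sum>n. poisson_mass z (A n))"
proof -
  have [measurable]: "complex_of_real -` A n \<in> sets lborel" for n using A(1) by auto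
  have [measurable]: "poisson_kernel z \<in> borel_measurable lborel" unfolding poisson_kernel_def by measurable
  have disj: "disjoint_family (\<lambda>n. complex_of_real -` A n)"
    using A(2) by (auto simp: disjoint_family_on_def)
  have "ennreal (indicator (\<Union>n. complex_of_real -` A n) t * poisson_kernel z t)
      = (\<Sum>n. ennreal (indicator (complex_of_real -` A n) t * poisson_kernel z t))" for t
  proof -
    have "ennreal (indicator (\<Union>n. complex_of_real -` A n) t * poisson_kernel z t)
        = indicator (\<Union>n. complex_of_real -` A n) t * ennreal (poisson_kernel z t)"
      by (simp add: indicator_def)
    also have "\<dots> = (\<Sum>n. indicator (complex_of_real -` A n) t) * ennreal (poisson_kernel z t)"
      by (simp add: suminf_indicator[OF disj])
    also have "\<dots> = (\<Sum>n. indicator (complex_of_real -` A n) t * ennreal (poisson_kernel z t))"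
      by (rule ennreal_suminf_multc[symmetric])
    also have "\<dots> = (\<Sum>n. ennreal (indicator (complex_of_real -` A n) t * poisson_kernel z t))"
      by (rule arg_cong[where f=suminf]) (auto simp: fun_eq_iff indicator_def)
    finally show ?thesis .
  qed
  hence "poisson_mass z (\<Union>n. A n)
      = (\<integral>\<^sup>+ t. (\<Sum>n. ennreal (indicator (complex_of_real -` A n) t * poisson_kernel z t)) \<partial>lborel)"
    by (simp add: poisson_mass_def vimage_UN)
  also have "\<dots> = (\<Sum>n. poisson_mass z (A n))"
    unfolding poisson_mass_def by (intro nn_integral_suminf) measurable
  finally show ?thesis .
qed

lemma poisson_mass_le_Im_inverse:
  assumes y: "Im z > 0" and R: "R > 0" "complex_of_real -` B \<subseteq> {-R..R}" and far: "2 * R \<le> cmod z"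
  shows "poisson_mass z B \<le> ennreal (3 * R) * ennreal (Im (1 / cnj z))"
proof -
  have "poisson_mass z B \<le> ennreal (interval_angle z 0 R)" by (rule poisson_mass_le_interval_angle[OF y R])
  also have "\<dots> \<le> ennreal (3 * R * Im z / (cmod z)\<^sup>2)"
    using interval_angle_le_far[OF y R(1), of 0] far by (intro ennreal_leI) simp
  also have "\<dots> = ennreal (3 * R) * ennreal (Im (1 / cnj z))"
    using R y by (simp add: Im_divide cmod_power2 ennreal_mult[symmetric])
  finally show ?thesis .
qed

lemma indicator_poisson_mass_le:
  assumes R: "R > 0" "complex_of_real -` B \<subseteq> {-R..R}"
  shows "indicator upper_open z * poisson_mass z B \<le> ennreal pi * indicator (cball 0 (max (2 * R) r0)) z
      + ennreal (3 * R) * (indicator (upper_open - ball 0 r0) z * ennreal (Im (1 / cnj z)))"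
proof (cases "z \<in> upper_open")
  case True
  hence y: "Im z > 0" by (simp add: upper_open_def)
  show ?thesis
  proof (cases "cmod z \<le> max (2 * R) r0")
    case True
    have "poisson_mass z B \<le> ennreal (interval_angle z 0 R)" by (rule poisson_mass_le_interval_angle[OF y R])
    also have "\<dots> \<le> ennreal pi" by (intro ennreal_leI interval_angle_le_pi)
    finally show ?thesis using True \<open>z \<in> upper_open\<close> by (simp add: add_increasing2)
  next
    case False
    thus ?thesis using poisson_mass_le_Im_inverse[OF y R] \<open>z \<in> upper_open\<close> by (simp add: add_increasing)
  qed
qed simp

section \<open>Countably additive set functions and their total variation\<close>

definition countably_additive_bounded :: "(complex set \<Rightarrow> real) \<Rightarrow> bool" where
  "countably_additive_bounded g \<longleftrightarrow>
     (\<forall>A. range A \<subseteq> sets borel \<longrightarrow> disjoint_family A \<longrightarrow> bounded (\<Union>n. A n) \<longrightarrow>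
        (\<lambda>n. g (A n)) sums g (\<Union>n. A n))"

lemma countably_additive_boundedD:
  "countably_additive_bounded g \<Longrightarrow> range (A :: nat \<Rightarrow> complex set) \<subseteq> sets borel \<Longrightarrow> disjoint_family A \<Longrightarrow>
    bounded (\<Union>n. A n) \<Longrightarrow> (\<lambda>n. g (A n)) sums g (\<Union>n. A n)"
  by (simp add: countably_additive_bounded_def)

lemma countably_additive_bounded_add:
  "countably_additive_bounded f \<Longrightarrow> countably_additive_bounded g \<Longrightarrow>
    countably_additive_bounded (\<lambda>B. f B + g B)"
  unfolding countably_additive_bounded_def by (auto intro!: sums_add)

lemma countably_additive_bounded_diff:
  "countably_additive_bounded f \<Longrightarrow> countably_additive_bounded g \<Longrightarrow>
    countably_additive_bounded (\<lambda>B. f B - g B)"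
  unfolding countably_additive_bounded_def by (auto intro!: sums_diff)

context
  fixes g :: "complex set \<Rightarrow> real"
  assumes g: "countably_additive_bounded g"
begin

lemma countably_additive_bounded_empty: "g {} = 0"
proof -
  have "(\<lambda>n::nat. g {}) sums g {}"
    using countably_additive_boundedD[OF g, of "\<lambda>_. {}"] by (simp add: disjoint_family_on_def)
  hence "(\<lambda>n::nat. g {}) \<longlonglongrightarrow> 0" by (intro summable_LIMSEQ_zero sums_summable)
  thus ?thesis using LIMSEQ_const_iff by blast
qed

lemma countably_additive_bounded_sum:
  fixes I :: "nat set"
  assumes "finite I" "disjoint_family_on P I" "\<And>i. i \<in> I \<Longrightarrow> P i \<in> sets borel"
    "bounded (\<Union>i\<in>I. P i)"
  shows "g (\<Union>i\<in>I. P i) = (\<Sum>i\<in>I. g (P i))"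
proof -
  define A where "A n = (if n \<in> I then P n else {})" for n
  have U: "(\<Union>n. A n) = (\<Union>i\<in>I. P i)" by (auto simp: A_def split: if_splits)
  have "(\<lambda>n. g (A n)) sums g (\<Union>n. A n)"
    using assms by (intro countably_additive_boundedD[OF g]) (auto simp: A_def disjoint_family_on_def U)
  moreover have "(\<lambda>n. g (A n)) sums (\<Sum>n\<in>I. g (A n))"
    using assms(1) countably_additive_bounded_empty by (intro sums_finite) (auto simp: A_def)
  ultimately show ?thesis by (simp add: sums_unique2 U A_def)
qed

lemma countably_additive_bounded_Un:
  assumes "X \<in> sets borel" "Y \<in> sets borel" "X \<inter> Y = {}" "bounded (X \<union> Y)"
  shows "g (X \<union> Y) = g X + g Y"
proof -
  have "g (\<Union>i\<in>{0::nat, 1}. if i = 0 then X else Y) = (\<Sum>i\<in>{0::nat, 1}. g (if i = 0 then X else Y))"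
    using assms by (intro countably_additive_bounded_sum) (auto simp: disjoint_family_on_def)
  thus ?thesis by (simp add: Un_commute)
qed

end

lemma tv_setfun_ge_sum:
  fixes I :: "nat set"
  assumes "finite I" "disjoint_family_on P I" "\<forall>i\<in>I. P i \<in> sets borel" "(\<Union>i\<in>I. P i) = B"
  shows "ereal (\<Sum>i\<in>I. \<bar>f (P i)\<bar>) \<le> tv_setfun f B"
  unfolding tv_setfun_def using assms by (intro SUP_upper2[of "(I, P)"]) auto

lemma tv_setfun_leI:
  assumes "\<And>(I :: nat set) P. finite I \<Longrightarrow> disjoint_family_on P I \<Longrightarrow> \<forall>i\<in>I. P i \<in> sets borel \<Longrightarrow>
      (\<Union>i\<in>I. P i) = B \<Longrightarrow> ereal (\<Sum>i\<in>I. \<bar>f (P i)\<bar>) \<le> c"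
  shows "tv_setfun f B \<le> c"
  unfolding tv_setfun_def using assms by (intro SUP_least) auto

lemma tv_setfun_nonneg: "B \<in> sets borel \<Longrightarrow> 0 \<le> tv_setfun f B"
  using tv_setfun_ge_sum[of "{0}" "\<lambda>_. B" B f] by (simp add: disjoint_family_on_def order_trans[rotated])

lemma tv_setfun_mono_Un:
  assumes A: "A \<in> sets borel" and J: "J \<in> sets borel" and AJ: "A \<inter> J = {}"
  shows "tv_setfun f A \<le> tv_setfun f (A \<union> J)"
proof (rule tv_setfun_leI)
  fix I :: "nat set" and P
  assume I: "finite I" "disjoint_family_on P I" "\<forall>i\<in>I. P i \<in> sets borel" "(\<Union>i\<in>I. P i) = A"
  obtain m where m: "m \<notin> I" using I(1) ex_new_if_finite[OF infinite_UNIV_nat] by blast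
  have "(\<Sum>i\<in>I. \<bar>f ((P(m := J)) i)\<bar>) = (\<Sum>i\<in>I. \<bar>f (P i)\<bar>)"
    using m by (intro sum.cong) auto
  hence "ereal (\<Sum>i\<in>I. \<bar>f (P i)\<bar>) \<le> ereal (\<Sum>i\<in>insert m I. \<bar>f ((P(m := J)) i)\<bar>)"
    using I(1) m by simp
  also have "\<dots> \<le> tv_setfun f (A \<union> J)"
    using I m J AJ by (intro tv_setfun_ge_sum) (auto simp: disjoint_family_on_def)
  finally show "ereal (\<Sum>i\<in>I. \<bar>f (P i)\<bar>) \<le> tv_setfun f (A \<union> J)" .
qed

lemma borel_image_of_real: "S \<in> sets borel \<Longrightarrow> complex_of_real ` S \<in> sets borel"
proof -
  assume S: "S \<in> sets borel"
  have "complex_of_real ` S = Re -` S \<inter> {z. Im z = 0}"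
    by (auto simp: image_iff complex_eq_iff)
  moreover have "Re -` S \<inter> space borel \<in> sets borel" using S by (intro measurable_sets[of Re borel borel]) auto
  moreover have "closed {z::complex. Im z = 0}" by (intro closed_Collect_eq continuous_intros)
  ultimately show ?thesis by auto
qed

lemma bounded_image_of_real: "bounded S \<Longrightarrow> bounded (complex_of_real ` S)"
  by (intro bounded_linear_image bounded_linear_of_real)

context
  fixes f U :: "complex set \<Rightarrow> real"
  assumes f: "countably_additive_bounded f" and U: "countably_additive_bounded U"
    and dom: "\<And>P. P \<in> sets borel \<Longrightarrow> bounded P \<Longrightarrow> \<bar>f P\<bar> \<le> U P"
begin

lemma tv_setfun_le_dominant:
  assumes B: "bounded B"
  shows "tv_setfun f B \<le> ereal (U B)"
proof (rule tv_setfun_leI)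
  fix I :: "nat set" and P
  assume I: "finite I" "disjoint_family_on P I" "\<forall>i\<in>I. P i \<in> sets borel" "(\<Union>i\<in>I. P i) = B"
  have "(\<Sum>i\<in>I. \<bar>f (P i)\<bar>) \<le> (\<Sum>i\<in>I. U (P i))"
    using I B by (intro sum_mono dom) (auto intro: bounded_subset)
  also have "\<dots> = U B" using countably_additive_bounded_sum[OF U I(1,2)] I(3,4) B by simp
  finally show "ereal (\<Sum>i\<in>I. \<bar>f (P i)\<bar>) \<le> ereal (U B)" by simp
qed

lemma tv_setfun_Un_le:
  assumes A: "A \<in> sets borel" and J: "J \<in> sets borel" and AJ: "A \<inter> J = {}" and bd: "bounded (A \<union> J)"
  shows "tv_setfun f (A \<union> J) \<le> tv_setfun f A + ereal (U J)"
proof (rule tv_setfun_leI)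
  fix I :: "nat set" and P
  assume I: "finite I" "disjoint_family_on P I" "\<forall>i\<in>I. P i \<in> sets borel" "(\<Union>i\<in>I. P i) = A \<union> J"
  have bounded: "bounded (P i)" if "i \<in> I" for i using I(4) that by (intro bounded_subset[OF bd]) auto
  have "\<bar>f (P i)\<bar> \<le> \<bar>f (P i \<inter> A)\<bar> + U (P i \<inter> J)" if i: "i \<in> I" for i
  proof -
    have "P i = (P i \<inter> A) \<union> (P i \<inter> J)" using I(4) i by auto
    hence "f (P i) = f (P i \<inter> A) + f (P i \<inter> J)"
      using I(3) i A J AJ bounded[OF i] by (metis countably_additive_bounded_Un[OF f] sets.Int Int_assoc
          Int_empty_right Int_left_commute)
    moreover have "\<bar>f (P i \<inter> J)\<bar> \<le> U (P i \<inter> J)"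
      using I(3) i J bounded[OF i] by (intro dom) (auto intro: bounded_subset)
    ultimately show ?thesis by linarith
  qed
  hence "(\<Sum>i\<in>I. \<bar>f (P i)\<bar>) \<le> (\<Sum>i\<in>I. \<bar>f (P i \<inter> A)\<bar>) + (\<Sum>i\<in>I. U (P i \<inter> J))"
    by (simp add: sum.distrib[symmetric] sum_mono)
  also have "(\<Sum>i\<in>I. U (P i \<inter> J)) = U (\<Union>i\<in>I. P i \<inter> J)"
    using I J bd
    by (intro countably_additive_bounded_sum[OF U, symmetric]) (auto simp: disjoint_family_on_def intro: bounded_subset)
  also have "(\<Union>i\<in>I. P i \<inter> J) = J" using I(4) by auto
  finally have "ereal (\<Sum>i\<in>I. \<bar>f (P i)\<bar>) \<le> ereal (\<Sum>i\<in>I. \<bar>f (P i \<inter> A)\<bar>) + ereal (U J)"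
    by simp
  also have "\<dots> \<le> tv_setfun f A + ereal (U J)"
    using I A by (intro add_right_mono tv_setfun_ge_sum) (auto simp: disjoint_family_on_def)
  finally show "ereal (\<Sum>i\<in>I. \<bar>f (P i)\<bar>) \<le> tv_setfun f A + ereal (U J)" .
qed

lemma tv_setfun_real_bounds:
  assumes "B \<in> sets borel" "bounded B"
  shows "tv_setfun f B = ereal (real_of_ereal (tv_setfun f B))"
    and "0 \<le> real_of_ereal (tv_setfun f B)" "real_of_ereal (tv_setfun f B) \<le> U B"
  using tv_setfun_nonneg[OF assms(1), of f] tv_setfun_le_dominant[OF assms(2)]
  by (cases "tv_setfun f B"; simp)+

lemma tv_setfun_real_Un_diff:
  assumes A: "A \<in> sets borel" and J: "J \<in> sets borel" and AJ: "A \<inter> J = {}" and bd: "bounded (A \<union> J)"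
  shows "0 \<le> real_of_ereal (tv_setfun f (A \<union> J)) - real_of_ereal (tv_setfun f A)"
    and "real_of_ereal (tv_setfun f (A \<union> J)) - real_of_ereal (tv_setfun f A) \<le> U J"
proof -
  have "tv_setfun f A \<le> tv_setfun f (A \<union> J)" by (rule tv_setfun_mono_Un[OF A J AJ])
  moreover have "tv_setfun f (A \<union> J) \<le> tv_setfun f A + ereal (U J)"
    by (rule tv_setfun_Un_le[OF A J AJ bd])
  moreover obtain x y where "tv_setfun f A = ereal x" "tv_setfun f (A \<union> J) = ereal y"
    using A J bd tv_setfun_real_bounds(1)[of A] tv_setfun_real_bounds(1)[of "A \<union> J"] by auto
  ultimately show "0 \<le> real_of_ereal (tv_setfun f (A \<union> J)) - real_of_ereal (tv_setfun f A)"
    and "real_of_ereal (tv_setfun f (A \<union> J)) - real_of_ereal (tv_setfun f A) \<le> U J"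
    by simp_all
qed

lemma tv_setfun_of_real_Un_diff:
  assumes S: "S \<in> sets borel" "S' \<in> sets borel" "S \<inter> S' = {}" "bounded (S \<union> S')"
  shows "0 \<le> real_of_ereal (tv_setfun f (complex_of_real ` (S \<union> S')))
              - real_of_ereal (tv_setfun f (complex_of_real ` S))"
    and "real_of_ereal (tv_setfun f (complex_of_real ` (S \<union> S')))
              - real_of_ereal (tv_setfun f (complex_of_real ` S)) \<le> U (complex_of_real ` S')"
proof -
  have "complex_of_real ` S \<inter> complex_of_real ` S' = {}" using S(3) by auto
  moreover have "bounded (complex_of_real ` S \<union> complex_of_real ` S')"
    using bounded_image_of_real[OF S(4)] by (simp add: image_Un)
  ultimately show "0 \<le> real_of_ereal (tv_setfun f (complex_of_real ` (S \<union> S')))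
              - real_of_ereal (tv_setfun f (complex_of_real ` S))"
    and "real_of_ereal (tv_setfun f (complex_of_real ` (S \<union> S')))
              - real_of_ereal (tv_setfun f (complex_of_real ` S)) \<le> U (complex_of_real ` S')"
    using tv_setfun_real_Un_diff[of "complex_of_real ` S" "complex_of_real ` S'"] S(1,2)
    by (simp_all add: image_Un borel_image_of_real)
qed

lemma tv_setfun_real_add_le:
  assumes A: "A \<in> sets borel" and J: "J \<in> sets borel" and AJ: "A \<inter> J = {}" and bd: "bounded (A \<union> J)"
  shows "0 \<le> real_of_ereal (tv_setfun f A) + real_of_ereal (tv_setfun f J)"
    and "real_of_ereal (tv_setfun f A) + real_of_ereal (tv_setfun f J) \<le> U (A \<union> J)"
  using tv_setfun_real_bounds(2,3)[OF A] tv_setfun_real_bounds(2,3)[OF J] bd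
    countably_additive_bounded_Un[OF U A J AJ bd]
  by auto

lemma distR_tv_setfun_increment:
  fixes t1 t2 :: real
  defines "F \<equiv> distR (\<lambda>B. real_of_ereal (tv_setfun f B))"
  assumes t12: "t1 < t2" and same_sign: "0 \<le> t1 * t2"
  obtains J where "J \<in> sets borel" "J \<subseteq> complex_of_real ` {t1..t2}" "0 \<le> F t2 - F t1" "F t2 - F t1 \<le> U J"
proof -
  define T where "T S = real_of_ereal (tv_setfun f (complex_of_real ` S))" for S
  have F: "F x = (if x \<ge> 0 then T {0..x} else - T {x..<0})" for x
    by (simp add: F_def distR_def T_def)
  have "\<not> (t1 < 0 \<and> 0 < t2)" using same_sign mult_neg_pos[of t1 t2] by auto
  then consider "0 \<le> t1" | "t2 < 0" | "t1 < 0" "t2 = 0"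
    using t12 by (cases "0 \<le> t1"; cases "t2 < 0") auto
  thus ?thesis
  proof cases
    case 1
    hence "{0..t1} \<union> {t1<..t2} = {0..t2}" "{0..t1} \<inter> {t1<..t2} = {}"
      "F t2 - F t1 = T {0..t2} - T {0..t1}" using t12 by (auto simp: F)
    thus ?thesis using tv_setfun_of_real_Un_diff[of "{0..t1}" "{t1<..t2}"]
      by (intro that[of "complex_of_real ` {t1<..t2}"]) (auto simp: T_def borel_image_of_real)
  next
    case 2
    hence "{t2..<0} \<union> {t1..<t2} = {t1..<0}" "{t2..<0} \<inter> {t1..<t2} = {}"
      "F t2 - F t1 = T {t1..<0} - T {t2..<0}" using t12 by (auto simp: F)
    thus ?thesis using tv_setfun_of_real_Un_diff[of "{t2..<0}" "{t1..<t2}"]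
      by (intro that[of "complex_of_real ` {t1..<t2}"]) (auto simp: T_def borel_image_of_real)
  next
    case 3
    \<comment> \<open>\<open>distR\<close> counts \<open>0\<close> on the nonnegative side, so here the increment is \<open>T {0} + T {t1..<0}\<close>.\<close>
    hence "complex_of_real ` {0} \<union> complex_of_real ` {t1..<0} = complex_of_real ` {t1..0}"
      "0 \<notin> complex_of_real ` {t1..<0}" "F t2 - F t1 = T {0} + T {t1..<0}"
      by (auto simp: F simp flip: image_Un intro!: arg_cong[where f = "image complex_of_real"])
    thus ?thesis using 3 tv_setfun_real_add_le[of "complex_of_real ` {0}" "complex_of_real ` {t1..<0}"]
      by (intro that[of "complex_of_real ` {t1..0}"])
         (auto simp: T_def borel_image_of_real bounded_image_of_real)
  qed
qed

end

section \<open>Balayage of measures satisfying the Blaschke condition\<close>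

lemma borel_measurable_cnj [measurable]: "cnj \<in> borel_measurable borel"
  by (intro borel_measurable_continuous_onI continuous_on_cnj continuous_on_id)

lemma upper_open_borel [measurable]: "upper_open \<in> sets borel"
  unfolding upper_open_def by (intro borel_open open_Collect_less continuous_intros)

lemma upper_closed_borel [measurable]: "upper_closed \<in> sets borel"
  unfolding upper_closed_def by (intro borel_closed closed_Collect_le continuous_intros)

lemma lower_closed_borel [measurable]: "lower_closed \<in> sets borel"
  unfolding lower_closed_def by (intro borel_closed closed_Collect_le continuous_intros)

definition blaschke_measure :: "complex measure \<Rightarrow> bool" where
  "blaschke_measure M \<longleftrightarrow> sets M = sets borel \<and> (\<forall>K. compact K \<longrightarrow> emeasure M K < \<infinity>) \<and>
     (\<exists>r0>0. (\<integral>\<^sup>+ z. indicator (upper_open - ball 0 r0) z * ennreal (Im (1 / cnj z)) \<partial>M) < \<infinity>)"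

lemma charge_pair_blaschke_measure:
  assumes "charge_pair np nn"
    and "\<exists>r0 > 0.
        (\<integral>\<^sup>+ z. indicator (upper_open - ball 0 r0) z * ennreal (Im (1 / cnj z)) \<partial>np)
      + (\<integral>\<^sup>+ z. indicator (upper_open - ball 0 r0) z * ennreal (Im (1 / cnj z)) \<partial>nn) < \<infinity>"
  shows "blaschke_measure np" and "blaschke_measure nn"
  using assms by (auto simp: charge_pair_def blaschke_measure_def)

(* pi times sweep M B (sweep_nn_eq_sweep), in ennreal: finiteness and countable additivity are
   proved for this form first. *)
definition sweep_nn :: "complex measure \<Rightarrow> complex set \<Rightarrow> ennreal" where
  "sweep_nn M B = (\<integral>\<^sup>+ z. indicator upper_open z * poisson_mass z B \<partial>M)"

definition sweep :: "complex measure \<Rightarrow> complex set \<Rightarrow> real" where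
  "sweep M B = (\<integral>z. indicator upper_open z * harm z B \<partial>M)"

definition balayage :: "complex measure \<Rightarrow> complex set \<Rightarrow> real" where
  "balayage M B = sweep M B + measure M (B \<inter> lower_closed)"

lemma bal_eq_balayage_diff: "bal np nn B = balayage np B - balayage nn B"
  by (simp add: bal_def balayage_def sweep_def)

context
  fixes M :: "complex measure"
  assumes M: "blaschke_measure M"
begin

lemma sets_blaschke_measure: "sets M = sets borel"
  using M by (simp add: blaschke_measure_def)

lemma space_blaschke_measure: "space M = UNIV"
  using sets_eq_imp_space_eq[OF sets_blaschke_measure] by simp

lemma emeasure_blaschke_bounded: "bounded B \<Longrightarrow> emeasure M B < \<infinity>"
proof -
  assume B: "bounded B"
  have "emeasure M B \<le> emeasure M (closure B)"
    by (intro emeasure_mono closure_subset) (simp add: sets_blaschke_measure)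
  also have "\<dots> < \<infinity>" using M B by (auto simp: blaschke_measure_def compact_closure)
  finally show ?thesis .
qed

lemma sigma_finite_blaschke_measure: "sigma_finite_measure M"
proof
  show "\<exists>A. countable A \<and> A \<subseteq> sets M \<and> \<Union> A = space M \<and> (\<forall>a\<in>A. emeasure M a \<noteq> \<infinity>)"
  proof (intro exI conjI)
    show "countable (range (\<lambda>n::nat. cball (0::complex) n))" by simp
    show "\<Union> (range (\<lambda>n::nat. cball (0::complex) n)) = space M"
      by (auto simp: space_blaschke_measure real_arch_simple)
    show "\<forall>a\<in>range (\<lambda>n::nat. cball 0 n). emeasure M a \<noteq> \<infinity>"
      using emeasure_blaschke_bounded[OF bounded_cball] by (simp add: less_top)
  qed (auto simp: sets_blaschke_measure)
qed

lemma measurable_blaschke_measure: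
  "f \<in> borel_measurable borel \<Longrightarrow> f \<in> borel_measurable M"
  using measurable_cong_sets[OF sets_blaschke_measure refl] by blast

lemma sweep_nn_finite:
  assumes B: "bounded B"
  shows "sweep_nn M B < \<infinity>"
proof -
  obtain r0 where r0: "r0 > 0"
    and blaschke: "(\<integral>\<^sup>+ z. indicator (upper_open - ball 0 r0) z * ennreal (Im (1 / cnj z)) \<partial>M) < \<infinity>"
    using M by (auto simp: blaschke_measure_def)
  obtain R where R: "R > 0" "complex_of_real -` B \<subseteq> {-R..R}" using bounded_vimage_of_real[OF B] .
  define R1 where "R1 = max (2 * R) r0"
  have [measurable]: "ball (0::complex) r0 \<in> sets borel" "cball (0::complex) R1 \<in> sets borel"
    by simp_all
  have meas: "(\<lambda>z. indicator (upper_open - ball 0 r0) z * ennreal (Im (1 / cnj z))) \<in> borel_measurable M"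
    by (intro measurable_blaschke_measure) measurable
  have "sweep_nn M B \<le> (\<integral>\<^sup>+ z. ennreal pi * indicator (cball 0 R1) z
      + ennreal (3 * R) * (indicator (upper_open - ball 0 r0) z * ennreal (Im (1 / cnj z))) \<partial>M)"
    unfolding sweep_nn_def R1_def by (intro nn_integral_mono indicator_poisson_mass_le R)
  also have "\<dots> = (\<integral>\<^sup>+ z. ennreal pi * indicator (cball 0 R1) z \<partial>M)
      + (\<integral>\<^sup>+ z. ennreal (3 * R) * (indicator (upper_open - ball 0 r0) z * ennreal (Im (1 / cnj z))) \<partial>M)"
    by (intro nn_integral_add measurable_blaschke_measure) measurable
  also have "\<dots> = ennreal pi * emeasure M (cball 0 R1)
      + ennreal (3 * R) * (\<integral>\<^sup>+ z. indicator (upper_open - ball 0 r0) z * ennreal (Im (1 / cnj z)) \<partial>M)"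
    using meas by (simp add: nn_integral_cmult_indicator nn_integral_cmult sets_blaschke_measure)
  also have "\<dots> < \<infinity>" using blaschke emeasure_blaschke_bounded[of "cball 0 R1"]
    by (simp add: ennreal_mult_less_top)
  finally show ?thesis .
qed

lemma sweep_nn_UN:
  assumes A: "range A \<subseteq> sets borel" "disjoint_family A"
  shows "sweep_nn M (\<Union>n. A n) = (\<Sum>n. sweep_nn M (A n))"
proof -
  have "indicator upper_open z * poisson_mass z (\<Union>n. A n) = (\<Sum>n. indicator upper_open z * poisson_mass z (A n))" for z
    using poisson_mass_UN[OF _ A, of z] by (auto simp: upper_open_def indicator_def)
  hence "sweep_nn M (\<Union>n. A n) = (\<integral>\<^sup>+ z. (\<Sum>n. indicator upper_open z * poisson_mass z (A n)) \<partial>M)"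
    by (simp add: sweep_nn_def)
  also have "\<dots> = (\<Sum>n. sweep_nn M (A n))"
    unfolding sweep_nn_def using A
    by (intro nn_integral_suminf measurable_blaschke_measure) auto
  finally show ?thesis .
qed

context
  fixes B :: "complex set"
  assumes B: "B \<in> sets borel" "bounded B"
begin

lemma indicator_poisson_mass_eq_harm:
  "indicator upper_open z * poisson_mass z B = ennreal pi * ennreal (indicator upper_open z * harm z B)"
  using poisson_mass_eq_harm[OF _ B, of z] by (cases "Im z > 0") (auto simp: upper_open_def ennreal_mult)

lemma indicator_harm_nonneg: "0 \<le> indicator upper_open z * harm z B"
  using poisson_mass_eq_harm(2)[OF _ B, of z] by (simp add: upper_open_def indicator_def)

lemma borel_measurable_harm: "(\<lambda>z. indicator upper_open z * harm z B) \<in> borel_measurable M"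
proof -
  have "indicator upper_open z * harm z B = indicator upper_open z * (enn2real (poisson_mass z B) / pi)" for z
    using poisson_mass_eq_harm[OF _ B, of z] by (auto simp: upper_open_def indicator_def)
  moreover have "(\<lambda>z. indicator upper_open z * (enn2real (poisson_mass z B) / pi)) \<in> borel_measurable borel"
    using B(1) by measurable
  ultimately show ?thesis by (simp add: measurable_blaschke_measure)
qed

lemma sweep_nn_eq_nn_integral_harm:
  "sweep_nn M B = ennreal pi * (\<integral>\<^sup>+ z. ennreal (indicator upper_open z * harm z B) \<partial>M)"
  unfolding sweep_nn_def indicator_poisson_mass_eq_harm
  using borel_measurable_harm by (intro nn_integral_cmult) auto

lemma integrable_harm: "integrable M (\<lambda>z. indicator upper_open z * harm z B)"
proof (intro integrableI_nonneg borel_measurable_harm AE_I2 indicator_harm_nonneg)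
  show "(\<integral>\<^sup>+ z. ennreal (indicator upper_open z * harm z B) \<partial>M) < \<infinity>"
    using sweep_nn_finite[OF B(2)] by (auto simp: sweep_nn_eq_nn_integral_harm ennreal_mult_less_top top.not_eq_extremum)
qed

lemma sweep_nonneg: "0 \<le> sweep M B"
  unfolding sweep_def using indicator_harm_nonneg by (intro integral_nonneg_AE) auto

lemma ennreal_sweep: "ennreal (sweep M B) = (\<integral>\<^sup>+ z. ennreal (indicator upper_open z * harm z B) \<partial>M)"
  unfolding sweep_def using integrable_harm indicator_harm_nonneg by (intro nn_integral_eq_integral[symmetric]) auto

lemma sweep_nn_eq_sweep: "sweep_nn M B = ennreal (pi * sweep M B)"
  by (simp add: sweep_nn_eq_nn_integral_harm ennreal_sweep[symmetric] ennreal_mult sweep_nonneg)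

end

lemma countably_additive_bounded_sweep: "countably_additive_bounded (sweep M)"
  unfolding countably_additive_bounded_def
proof (intro allI impI)
  fix A :: "nat \<Rightarrow> complex set"
  assume A: "range A \<subseteq> sets borel" "disjoint_family A" "bounded (\<Union>n. A n)"
  have A': "A n \<in> sets borel" "bounded (A n)" for n
    using A by (auto intro: bounded_subset[OF A(3)])
  have U: "(\<Union>n. A n) \<in> sets borel" using A(1) by auto
  have "(\<lambda>n. sweep_nn M (A n)) sums sweep_nn M (\<Union>n. A n)"
    unfolding sweep_nn_UN[OF A(1,2)] by (rule summable_sums[OF summableI])
  hence "(\<lambda>n. pi * sweep M (A n)) sums (pi * sweep M (\<Union>n. A n))"
    using sweep_nonneg A' U A(3)
    by (simp add: sweep_nn_eq_sweep sweep_nn_eq_sweep[OF U A(3)] sums_ennreal)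
  from sums_divide[OF this, of pi] show "(\<lambda>n. sweep M (A n)) sums sweep M (\<Union>n. A n)" by simp
qed

lemma countably_additive_bounded_lower_part:
  "countably_additive_bounded (\<lambda>B. measure M (B \<inter> lower_closed))"
  unfolding countably_additive_bounded_def
proof (intro allI impI)
  fix A :: "nat \<Rightarrow> complex set"
  assume A: "range A \<subseteq> sets borel" "disjoint_family A" "bounded (\<Union>n. A n)"
  have "(\<lambda>n. measure M (A n \<inter> lower_closed)) sums measure M (\<Union>n. A n \<inter> lower_closed)"
  proof (rule measure_UNION)
    show "range (\<lambda>n. A n \<inter> lower_closed) \<subseteq> sets M" using A(1) by (auto simp: sets_blaschke_measure)
    show "disjoint_family (\<lambda>n. A n \<inter> lower_closed)" using A(2) by (auto simp: disjoint_family_on_def)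
    have "bounded (\<Union>n. A n \<inter> lower_closed)" using A(3) by (rule bounded_subset) auto
    thus "emeasure M (\<Union>n. A n \<inter> lower_closed) \<noteq> \<infinity>"
      using emeasure_blaschke_bounded by (simp add: less_top)
  qed
  thus "(\<lambda>n. measure M (A n \<inter> lower_closed)) sums measure M ((\<Union>n. A n) \<inter> lower_closed)"
    by (simp add: UN_extend_simps(4)[symmetric])
qed

lemma countably_additive_bounded_balayage: "countably_additive_bounded (balayage M)"
  unfolding balayage_def[abs_def]
  by (intro countably_additive_bounded_add countably_additive_bounded_sweep countably_additive_bounded_lower_part)

lemma balayage_nonneg: "B \<in> sets borel \<Longrightarrow> bounded B \<Longrightarrow> 0 \<le> balayage M B"
  unfolding balayage_def using sweep_nonneg by (simp add: add_nonneg_nonneg)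

lemma ennreal_balayage_lower:
  assumes J: "J \<in> sets borel" "bounded J" "J \<subseteq> lower_closed"
  shows "ennreal (balayage M J) = (\<integral>\<^sup>+ z. ennreal (indicator upper_open z * harm z J) + indicator J z \<partial>M)"
proof -
  have "emeasure M J \<noteq> top" using emeasure_blaschke_bounded[OF J(2)] by simp
  hence "ennreal (balayage M J) = ennreal (sweep M J) + emeasure M J"
    using sweep_nonneg[OF J(1,2)] J(3) by (simp add: balayage_def emeasure_eq_ennreal_measure Int_absorb2)
  also have "\<dots> = (\<integral>\<^sup>+ z. ennreal (indicator upper_open z * harm z J) + indicator J z \<partial>M)"
    using borel_measurable_harm[OF J(1,2)] J(1) sets_blaschke_measure
    by (simp add: ennreal_sweep[OF J(1,2)] nn_integral_add nn_integral_indicator)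
  finally show ?thesis .
qed

end

section \<open>A pointwise majorant of harmonic measure\<close>

lemma interval_angle_le_Im_inverse:
  assumes y: "Im z > 0" and r: "r > 0" and rx: "r \<le> \<bar>x0\<bar>" and a: "0 < a" "a < 1"
    and far: "3 / a * \<bar>x0\<bar> < cmod z"
  shows "interval_angle z x0 r / pi \<le> r / (1 - a)\<^sup>2 * \<bar>Im (1 / z)\<bar>"
proof -
  define m where "m = cmod z"
  define q where "q = \<bar>x0\<bar>"
  define \<rho> where "\<rho> = cmod (z - of_real x0)"
  have q0: "q > 0" using r rx by (simp add: q_def)
  have "3 * q \<le> 3 / a * q" using a q0 by (simp add: field_simps)
  hence m3: "3 * q < m" using far by (simp add: m_def q_def)
  have qa: "q < a * m / 3" using far a by (simp add: m_def q_def field_simps)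
  have rho: "m - q \<le> \<rho>"
    using norm_triangle_ineq2[of z "of_real x0"] by (simp add: \<rho>_def m_def q_def)
  \<comment> \<open>\<open>\<rho>\<^sup>2 - r\<^sup>2 \<ge> (m - q)\<^sup>2 - q\<^sup>2 = m\<^sup>2 - 2 m q \<ge> (1 - a) m\<^sup>2\<close>, using \<open>q < a m / 3\<close>.\<close>
  have "(m - q)\<^sup>2 \<le> \<rho>\<^sup>2" using rho m3 q0 by (intro power_mono) auto
  moreover have "r\<^sup>2 \<le> q\<^sup>2" using rx r by (intro power_mono) (auto simp: q_def)
  moreover have "2 * m * q \<le> 2 * m * (a * m / 3)" using qa m3 q0 by (intro mult_left_mono) auto
  moreover have "m\<^sup>2 * (1 - a) \<le> m\<^sup>2 - 2 * m * (a * m / 3)"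
    using a by (simp add: power2_eq_square algebra_simps)
  ultimately have d: "m\<^sup>2 * (1 - a) \<le> \<rho>\<^sup>2 - r\<^sup>2" by (simp add: power2_eq_square algebra_simps)
  have dpos: "0 < m\<^sup>2 * (1 - a)" using m3 q0 a by simp
  have "r < \<rho>" using rho m3 rx q0 by (simp add: q_def)
  hence "interval_angle z x0 r \<le> 2 * r * Im z / (\<rho>\<^sup>2 - r\<^sup>2)"
    using interval_angle_le_outside(2)[OF y r] by (simp add: \<rho>_def)
  also have "\<dots> \<le> 2 * r * Im z / (m\<^sup>2 * (1 - a))"
    using d dpos r y by (intro divide_left_mono) (auto intro: mult_pos_pos)
  finally have "interval_angle z x0 r / pi \<le> 2 * r * Im z / (m\<^sup>2 * (1 - a)) / pi"
    by (intro divide_right_mono) auto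
  also have "\<dots> = (2 / (pi * (1 - a))) * (r * (Im z / m\<^sup>2))" by (simp add: field_simps)
  also have "\<dots> \<le> (1 / (1 - a)\<^sup>2) * (r * (Im z / m\<^sup>2))"
  proof (rule mult_right_mono)
    have "2 * (1 - a)\<^sup>2 \<le> pi * (1 - a)" using a pi_gt3 by (simp add: power2_eq_square)
    thus "2 / (pi * (1 - a)) \<le> 1 / (1 - a)\<^sup>2" using a by (simp add: field_simps)
  qed (use r y in simp)
  also have "\<dots> = r / (1 - a)\<^sup>2 * \<bar>Im (1 / z)\<bar>"
    using y by (simp add: Im_divide cmod_power2 m_def)
  finally show ?thesis .
qed

lemma nn_integral_inverse_square:
  assumes "0 < c" "c \<le> d"
  shows "(\<integral>\<^sup>+ t. ennreal (indicator {c..d} t * (1 / t\<^sup>2)) \<partial>lborel) = ennreal (1 / c - 1 / d)"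
proof -
  have "((\<lambda>t. - 1 / t) has_real_derivative (1 / t\<^sup>2)) (at t)" if "t \<in> {c..d}" for t
    using that assms by (auto intro!: derivative_eq_intros simp: power2_eq_square)
  hence "((\<lambda>t. 1 / t\<^sup>2) has_integral ((- 1 / d) - (- 1 / c))) {c..d}"
    using assms(2) by (intro fundamental_theorem_of_calculus)
      (auto simp: has_real_derivative_iff_has_vector_derivative has_vector_derivative_at_within)
  from nn_integral_has_integral_lebesgue[OF _ this] show ?thesis by simp
qed

(* By Tonelli (nn_integral_disc_weight) its integral against M is the integral over [r, s] of
   M(D(c, t)) / t^2 dt, the last term of the estimate. *)
definition disc_weight :: "complex \<Rightarrow> real \<Rightarrow> real \<Rightarrow> complex \<Rightarrow> ennreal" where
  "disc_weight c r s z = (\<integral>\<^sup>+ t. indicator {r..s} t * indicator (cball c t) z * ennreal (1 / t\<^sup>2) \<partial>lborel)"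

lemma disc_weight_ge:
  assumes "0 < r" "r \<le> dist c z" "dist c z \<le> s"
  shows "ennreal (1 / dist c z - 1 / s) \<le> disc_weight c r s z"
proof -
  have "ennreal (1 / dist c z - 1 / s) = (\<integral>\<^sup>+ t. ennreal (indicator {dist c z..s} t * (1 / t\<^sup>2)) \<partial>lborel)"
    using assms by (intro nn_integral_inverse_square[symmetric]) auto
  also have "\<dots> \<le> disc_weight c r s z" unfolding disc_weight_def
    using assms by (intro nn_integral_mono) (auto simp: indicator_def)
  finally show ?thesis .
qed

lemma indicator_cball_eq: "indicator (cball c t) z = (of_bool (dist c z \<le> t) :: ennreal)"
  by (simp add: indicator_def)

lemma borel_measurable_disc_weight [measurable]: "disc_weight c r s \<in> borel_measurable borel"
  unfolding disc_weight_def[abs_def] indicator_cball_eq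
  by (rule lborel.borel_measurable_nn_integral) measurable

lemma interval_angle_le_disc_weight:
  assumes y: "Im z > 0" and r: "r > 0" and out: "r < dist (of_real c) z" and s: "s > 0"
  shows "ennreal (interval_angle z c r / pi) \<le> ennreal r * disc_weight (of_real c) r s z + ennreal (2 * r / s)"
proof -
  define \<rho> where "\<rho> = dist (of_real c) z"
  have ratio: "interval_angle z c r / pi \<le> r / \<rho>"
    using interval_angle_le_ratio[OF y r, of c] out
    by (simp add: \<rho>_def dist_norm norm_minus_commute field_simps)
  have "r / s \<le> 2 * r / s" using r s by (simp add: divide_right_mono)
  show ?thesis
  proof (cases "\<rho> \<le> s")
    case True
    \<comment> \<open>\<open>r / \<rho> = r (1 / \<rho> - 1 / s) + r / s\<close>, and \<open>1 / \<rho> - 1 / s\<close> is at most the disc weight.\<close>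
    have "r / \<rho> = r * (1 / \<rho> - 1 / s) + r / s" using out r s by (simp add: \<rho>_def field_simps)
    moreover have "1 / s \<le> 1 / \<rho>" using True out r by (intro divide_left_mono mult_pos_pos) (auto simp: \<rho>_def)
    ultimately have "interval_angle z c r / pi \<le> r * (1 / \<rho> - 1 / s) + 2 * r / s"
      and nonneg: "0 \<le> 1 / \<rho> - 1 / s"
      using ratio \<open>r / s \<le> 2 * r / s\<close> by linarith+
    hence "ennreal (interval_angle z c r / pi) \<le> ennreal (r * (1 / \<rho> - 1 / s) + 2 * r / s)"
      by (intro ennreal_leI)
    also have "\<dots> = ennreal r * ennreal (1 / \<rho> - 1 / s) + ennreal (2 * r / s)"
      using nonneg r s by (simp add: ennreal_mult)
    also have "\<dots> \<le> ennreal r * disc_weight (of_real c) r s z + ennreal (2 * r / s)"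
      using disc_weight_ge[OF r, of "of_real c" z s] out True by (intro add_mono mult_left_mono) (auto simp: \<rho>_def)
    finally show ?thesis .
  next
    case False
    hence "r / \<rho> \<le> r / s" using r s by (intro divide_left_mono) auto
    hence "interval_angle z c r / pi \<le> 2 * r / s" using ratio \<open>r / s \<le> 2 * r / s\<close> by linarith
    thus ?thesis by (simp add: ennreal_leI add_increasing)
  qed
qed

(* A majorant of omega(z, [x0 - r, x0 + r]) on the closed upper half-plane whose integral against a
   measure is the right-hand side of the estimate. *)
definition interval_majorant :: "real \<Rightarrow> real \<Rightarrow> real \<Rightarrow> complex \<Rightarrow> ennreal" where
  "interval_majorant x0 r a z =
      indicator (cball (of_real x0) r \<inter> upper_closed) z
    + ennreal (2 * r / (a * \<bar>x0\<bar>)) * indicator (cball 0 (3 / a * \<bar>x0\<bar>) \<inter> upper_closed) z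
    + ennreal (r / (1 - a)\<^sup>2) * (indicator ({z. cmod z \<ge> \<bar>x0\<bar>} \<inter> upper_closed) z * ennreal \<bar>Im (1 / z)\<bar>)
    + ennreal r * (indicator upper_closed z * disc_weight (of_real x0) r (a * \<bar>x0\<bar>) z)"

lemma interval_angle_le_majorant:
  assumes y: "Im z > 0" and r: "r > 0" and rx: "r \<le> \<bar>x0\<bar>" and a: "0 < a" "a < 1"
  shows "ennreal (interval_angle z x0 r / pi) \<le> interval_majorant x0 r a z"
proof -
  have z: "z \<in> upper_closed" using y by (simp add: upper_closed_def)
  have "a * cmod z \<le> cmod z" using a by (intro mult_left_le_one_le) auto
  consider "dist (of_real x0) z \<le> r" | "3 / a * \<bar>x0\<bar> < cmod z"
    | "r < dist (of_real x0) z" "cmod z \<le> 3 / a * \<bar>x0\<bar>" by linarith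
  thus ?thesis
  proof cases
    case 1
    have "interval_angle z x0 r / pi \<le> 1" using interval_angle_le_pi[of z x0 r] by simp
    thus ?thesis using 1 z by (simp add: interval_majorant_def add.assoc add_increasing2)
  next
    case 2
    hence "z \<in> {z. cmod z \<ge> \<bar>x0\<bar>} \<inter> upper_closed"
      using z a \<open>a * cmod z \<le> cmod z\<close> by (simp add: field_simps)
    moreover have "ennreal (interval_angle z x0 r / pi) \<le> ennreal (r / (1 - a)\<^sup>2) * ennreal \<bar>Im (1 / z)\<bar>"
      using interval_angle_le_Im_inverse[OF y r rx a 2] r by (simp add: ennreal_mult[symmetric] ennreal_leI)
    ultimately show ?thesis by (simp add: interval_majorant_def add.assoc add_increasing add_increasing2)
  next
    case 3
    have "0 < a * \<bar>x0\<bar>" using a r rx by simp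
    hence "ennreal (interval_angle z x0 r / pi)
        \<le> ennreal r * disc_weight (of_real x0) r (a * \<bar>x0\<bar>) z + ennreal (2 * r / (a * \<bar>x0\<bar>))"
      by (rule interval_angle_le_disc_weight[OF y r 3(1)])
    also have "\<dots> \<le> interval_majorant x0 r a z"
      using 3(2) z unfolding interval_majorant_def by (simp add: add_mono add_increasing algebra_simps)
    finally show ?thesis .
  qed
qed

lemma harm_le_interval_angle:
  assumes y: "Im z > 0" and r: "0 \<le> r"
    and J: "J \<in> sets borel" "J \<subseteq> complex_of_real ` {x0 - r..x0 + r}"
  shows "harm z J \<le> interval_angle z x0 r / pi"
proof -
  have "bounded J" using J(2) bounded_image_of_real[of "{x0 - r..x0 + r}"] by (auto intro: bounded_subset)
  hence "ennreal (pi * harm z J) = poisson_mass z J" using poisson_mass_eq_harm(1)[OF y J(1)] by simp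
  also have "\<dots> \<le> poisson_mass z (complex_of_real ` {x0 - r..x0 + r})"
    using y J(2) by (intro poisson_mass_mono) auto
  also have "\<dots> = ennreal (interval_angle z x0 r)" by (rule poisson_mass_interval[OF y r])
  finally have "pi * harm z J \<le> interval_angle z x0 r"
    using interval_angle_nonneg[OF y r] by (simp add: ennreal_le_iff)
  thus ?thesis by (simp add: field_simps)
qed

lemma balayage_integrand_le_majorant:
  assumes J: "J \<in> sets borel" "J \<subseteq> complex_of_real ` {x0 - r..x0 + r}"
    and r: "r > 0" and rx: "r \<le> \<bar>x0\<bar>" and a: "0 < a" "a < 1"
  shows "ennreal (indicator upper_open z * harm z J) + indicator J z \<le> interval_majorant x0 r a z"
proof (cases "Im z > 0")
  case True
  hence "z \<notin> J" "z \<in> upper_open" using J(2) by (auto simp: upper_open_def)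
  moreover have "ennreal (harm z J) \<le> ennreal (interval_angle z x0 r / pi)"
    using harm_le_interval_angle[OF True _ J] r by (intro ennreal_leI) simp
  ultimately show ?thesis using interval_angle_le_majorant[OF True r rx a] by simp
next
  case False
  have "indicator J z \<le> (indicator (cball (of_real x0) r \<inter> upper_closed) z :: ennreal)"
  proof (cases "z \<in> J")
    case True
    then obtain t where "z = of_real t" "t \<in> {x0 - r..x0 + r}" using J(2) by auto
    thus ?thesis by (auto simp: upper_closed_def dist_norm abs_le_iff indicator_def simp flip: of_real_diff)
  qed simp
  with False show ?thesis by (simp add: interval_majorant_def upper_open_def add.assoc add_increasing2)
qed

lemma nn_integral_div_square_le:
  fixes g :: "real \<Rightarrow> real"
  assumes g: "mono g" "\<And>t. 0 \<le> g t" and r: "0 < r"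
  shows "(\<integral>\<^sup>+ t. ennreal (indicator {r..s} t * (g t / t\<^sup>2)) \<partial>lborel)
      \<le> ennreal (max 0 (LBINT t = r..s. g t / t\<^sup>2))"
proof (cases "r \<le> s")
  case True
  have [measurable]: "g \<in> borel_measurable borel" using g(1) by (rule borel_measurable_mono)
  have nonneg: "0 \<le> indicator {r..s} t * (g t / t\<^sup>2)" for t using g(2) by simp
  \<comment> \<open>By monotonicity of \<open>g\<close> the integrand is at most \<open>g s / r\<^sup>2\<close>, hence integrable.\<close>
  have "ennreal (indicator {r..s} t * (g t / t\<^sup>2)) \<le> ennreal (g s / r\<^sup>2) * indicator {r..s} t" for t
  proof (cases "t \<in> {r..s}")
    case True
    have "r\<^sup>2 \<le> t\<^sup>2" using True r by (intro power_mono) auto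
    hence "g t / t\<^sup>2 \<le> g s / r\<^sup>2" using True r g by (intro frac_le) (auto simp: monoD)
    thus ?thesis using True by (simp add: ennreal_leI)
  qed simp
  hence "(\<integral>\<^sup>+ t. ennreal (indicator {r..s} t * (g t / t\<^sup>2)) \<partial>lborel)
      \<le> (\<integral>\<^sup>+ t. ennreal (g s / r\<^sup>2) * indicator {r..s} t \<partial>lborel)"
    by (intro nn_integral_mono)
  also have "\<dots> < \<infinity>" using True by (simp add: nn_integral_cmult_indicator ennreal_mult_less_top)
  finally have "integrable lborel (\<lambda>t. indicator {r..s} t * (g t / t\<^sup>2))"
    using nonneg by (intro integrableI_nonneg) auto
  hence "(\<integral>\<^sup>+ t. ennreal (indicator {r..s} t * (g t / t\<^sup>2)) \<partial>lborel)
      = ennreal (LBINT t = r..s. g t / t\<^sup>2)"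
    using True nonneg
    by (simp add: nn_integral_eq_integral interval_integral_Icc set_lebesgue_integral_def)
  thus ?thesis by (simp add: ennreal_leI)
qed simp

context
  fixes M :: "complex measure"
  assumes M: "blaschke_measure M"
begin

lemma emeasure_cball_upper:
  "emeasure M (cball c t \<inter> upper_closed) = ennreal (measure M (cball c t \<inter> upper_closed))"
proof -
  have "bounded (cball c t \<inter> upper_closed)" by (intro bounded_Int) simp
  thus ?thesis using emeasure_blaschke_bounded[OF M] by (intro emeasure_eq_ennreal_measure) (simp add: less_top)
qed

lemma mono_measure_cball_upper: "mono (\<lambda>t. measure M (cball c t \<inter> upper_closed))"
proof
  fix t u :: real
  assume "t \<le> u"
  hence "emeasure M (cball c t \<inter> upper_closed) \<le> emeasure M (cball c u \<inter> upper_closed)"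
    using sets_blaschke_measure[OF M] by (intro emeasure_mono) auto
  thus "measure M (cball c t \<inter> upper_closed) \<le> measure M (cball c u \<inter> upper_closed)"
    by (simp add: emeasure_cball_upper)
qed

lemma nn_integral_disc_weight:
  "(\<integral>\<^sup>+ z. indicator upper_closed z * disc_weight c r s z \<partial>M)
     = (\<integral>\<^sup>+ t. indicator {r..s} t * ennreal (1 / t\<^sup>2) * emeasure M (cball c t \<inter> upper_closed) \<partial>lborel)"
proof -
  interpret sigma_finite_measure M by (rule sigma_finite_blaschke_measure[OF M])
  interpret pair_sigma_finite lborel M by unfold_locales
  define f where "f t z = indicator {r..s} t * indicator (cball c t) z * ennreal (1 / t\<^sup>2) * indicator upper_closed z" for t z
  have "case_prod f \<in> borel_measurable (lborel \<Otimes>\<^sub>M borel)"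
    unfolding f_def indicator_cball_eq by measurable
  moreover have "sets (lborel \<Otimes>\<^sub>M M) = sets (lborel \<Otimes>\<^sub>M borel)"
    by (intro sets_pair_measure_cong) (auto simp: sets_blaschke_measure[OF M])
  ultimately have f: "case_prod f \<in> borel_measurable (lborel \<Otimes>\<^sub>M M)"
    using measurable_cong_sets by blast
  have "(\<integral>\<^sup>+ z. indicator upper_closed z * disc_weight c r s z \<partial>M) = (\<integral>\<^sup>+ z. (\<integral>\<^sup>+ t. f t z \<partial>lborel) \<partial>M)"
  proof (intro nn_integral_cong)
    fix z
    have "(\<lambda>t. indicator {r..s} t * indicator (cball c t) z * ennreal (1 / t\<^sup>2)) \<in> borel_measurable lborel"
      unfolding indicator_cball_eq by measurable
    from nn_integral_cmult[OF this, of "indicator upper_closed z"]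
    show "indicator upper_closed z * disc_weight c r s z = (\<integral>\<^sup>+ t. f t z \<partial>lborel)"
      unfolding disc_weight_def f_def by (simp add: mult.commute)
  qed
  also have "\<dots> = (\<integral>\<^sup>+ t. (\<integral>\<^sup>+ z. f t z \<partial>M) \<partial>lborel)"
    using Fubini'[OF f] by simp
  also have "\<dots> = (\<integral>\<^sup>+ t. indicator {r..s} t * ennreal (1 / t\<^sup>2) * emeasure M (cball c t \<inter> upper_closed) \<partial>lborel)"
  proof (intro nn_integral_cong)
    fix t
    have "(\<integral>\<^sup>+ z. f t z \<partial>M)
        = (\<integral>\<^sup>+ z. (indicator {r..s} t * ennreal (1 / t\<^sup>2)) * indicator (cball c t \<inter> upper_closed) z \<partial>M)"
      unfolding f_def by (intro nn_integral_cong) (simp add: indicator_inter_arith mult_ac)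
    also have "\<dots> = indicator {r..s} t * ennreal (1 / t\<^sup>2) * emeasure M (cball c t \<inter> upper_closed)"
      using sets_blaschke_measure[OF M] by (intro nn_integral_cmult_indicator) auto
    finally show "(\<integral>\<^sup>+ z. f t z \<partial>M) = \<dots>" .
  qed
  finally show ?thesis .
qed

lemma nn_integral_interval_majorant:
  "(\<integral>\<^sup>+ z. interval_majorant x0 r a z \<partial>M) = emeasure M (cball (of_real x0) r \<inter> upper_closed)
    + ennreal (2 * r / (a * \<bar>x0\<bar>)) * emeasure M (cball 0 (3 / a * \<bar>x0\<bar>) \<inter> upper_closed)
    + ennreal (r / (1 - a)\<^sup>2) * (\<integral>\<^sup>+ z. indicator ({z. cmod z \<ge> \<bar>x0\<bar>} \<inter> upper_closed) z * ennreal \<bar>Im (1 / z)\<bar> \<partial>M)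
    + ennreal r * (\<integral>\<^sup>+ z. indicator upper_closed z * disc_weight (of_real x0) r (a * \<bar>x0\<bar>) z \<partial>M)"
proof -
  have "(\<lambda>z. ennreal \<bar>Im (1 / z)\<bar>) \<in> borel_measurable M"
    "disc_weight (of_real x0) r (a * \<bar>x0\<bar>) \<in> borel_measurable M"
    by (intro measurable_blaschke_measure[OF M]; measurable)+
  moreover have "cball (of_real x0) r \<inter> upper_closed \<in> sets M"
    "cball 0 (3 / a * \<bar>x0\<bar>) \<inter> upper_closed \<in> sets M"
    "{z. cmod z \<ge> \<bar>x0\<bar>} \<inter> upper_closed \<in> sets M" "upper_closed \<in> sets M"
    using sets_blaschke_measure[OF M]
    by (auto intro!: sets.Int borel_closed closed_Collect_le continuous_intros)
  ultimately show ?thesis unfolding interval_majorant_def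
    by (simp add: nn_integral_add nn_integral_cmult nn_integral_indicator)
qed

lemma balayage_le_majorant:
  assumes J: "J \<in> sets borel" "J \<subseteq> complex_of_real ` {x0 - r..x0 + r}"
    and r: "r > 0" and rx: "r \<le> \<bar>x0\<bar>" and a: "0 < a" "a < 1"
  shows "ennreal (balayage M J) \<le> (\<integral>\<^sup>+ z. interval_majorant x0 r a z \<partial>M)"
proof -
  have "bounded J" using J(2) bounded_image_of_real[of "{x0 - r..x0 + r}"] by (auto intro: bounded_subset)
  moreover have "J \<subseteq> lower_closed" using J(2) by (auto simp: lower_closed_def)
  ultimately have "ennreal (balayage M J)
      = (\<integral>\<^sup>+ z. ennreal (indicator upper_open z * harm z J) + indicator J z \<partial>M)"
    using ennreal_balayage_lower[OF M J(1)] by simp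
  also have "\<dots> \<le> (\<integral>\<^sup>+ z. interval_majorant x0 r a z \<partial>M)"
    by (intro nn_integral_mono balayage_integrand_le_majorant J r rx a)
  finally show ?thesis .
qed

end

context
  fixes np nn :: "complex measure"
  assumes np: "blaschke_measure np" and nn: "blaschke_measure nn"
begin

lemma nn_integral_disc_weight_add_le:
  assumes r: "0 < r"
  shows "(\<integral>\<^sup>+ z. indicator upper_closed z * disc_weight c r s z \<partial>np)
       + (\<integral>\<^sup>+ z. indicator upper_closed z * disc_weight c r s z \<partial>nn)
       \<le> ennreal (max 0 (LBINT t = r..s. enn2real (tv_up np nn (cball c t)) / t\<^sup>2))"
proof -
  define mp where "mp t = measure np (cball c t \<inter> upper_closed)" for t
  define mn where "mn t = measure nn (cball c t \<inter> upper_closed)" for t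
  have mono: "mono mp" "mono mn"
    unfolding mp_def mn_def by (intro mono_measure_cball_upper np nn)+
  have [measurable]: "mp \<in> borel_measurable borel" "mn \<in> borel_measurable borel"
    using mono by (auto intro: borel_measurable_mono)
  have tv_up: "enn2real (tv_up np nn (cball c t)) = mp t + mn t" for t
    by (simp add: tv_up_def tv_nu_def mp_def mn_def emeasure_cball_upper[OF np] emeasure_cball_upper[OF nn]
        ennreal_plus[symmetric] del: ennreal_plus)
  have emeasure: "indicator {r..s} t * ennreal (1 / t\<^sup>2) * emeasure M (cball c t \<inter> upper_closed)
      = ennreal (indicator {r..s} t * (1 / t\<^sup>2) * measure M (cball c t \<inter> upper_closed))"
    if "blaschke_measure M" for M t
    using ennreal_mult[of "1 / t\<^sup>2" "measure M (cball c t \<inter> upper_closed)"]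
    by (simp add: emeasure_cball_upper[OF that] indicator_def)
  have "(\<integral>\<^sup>+ z. indicator upper_closed z * disc_weight c r s z \<partial>np)
      + (\<integral>\<^sup>+ z. indicator upper_closed z * disc_weight c r s z \<partial>nn)
      = (\<integral>\<^sup>+ t. ennreal (indicator {r..s} t * (1 / t\<^sup>2) * mp t) \<partial>lborel)
      + (\<integral>\<^sup>+ t. ennreal (indicator {r..s} t * (1 / t\<^sup>2) * mn t) \<partial>lborel)"
    by (simp add: nn_integral_disc_weight[OF np] nn_integral_disc_weight[OF nn] emeasure[OF np]
        emeasure[OF nn] mp_def mn_def)
  also have "\<dots> = (\<integral>\<^sup>+ t. ennreal (indicator {r..s} t * (1 / t\<^sup>2) * mp t)
      + ennreal (indicator {r..s} t * (1 / t\<^sup>2) * mn t) \<partial>lborel)"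
    by (rule nn_integral_add[symmetric]) measurable
  also have "\<dots> = (\<integral>\<^sup>+ t. ennreal (indicator {r..s} t * ((mp t + mn t) / t\<^sup>2)) \<partial>lborel)"
    using measure_nonneg[of np] measure_nonneg[of nn] unfolding mp_def mn_def
    by (intro nn_integral_cong) (simp add: indicator_def add_divide_distrib ennreal_plus[symmetric] del: ennreal_plus)
  also have "\<dots> \<le> ennreal (max 0 (LBINT t = r..s. (mp t + mn t) / t\<^sup>2))"
  proof (rule nn_integral_div_square_le)
    show "mono (\<lambda>t. mp t + mn t)" using mono by (simp add: mono_def add_mono)
  qed (use r in \<open>auto simp: mp_def mn_def\<close>)
  finally show ?thesis by (simp add: tv_up)
qed

lemma balayage_add_le:
  assumes J: "J \<in> sets borel" "J \<subseteq> complex_of_real ` {x0 - r..x0 + r}"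
    and r: "0 < r" "r \<le> \<bar>x0\<bar>" and a: "0 < a" "a < 1"
  shows "ennreal (balayage np J + balayage nn J)
    \<le> tv_up np nn (cball (complex_of_real x0) r)
     + ennreal (2 * r / (a * \<bar>x0\<bar>)) * tv_up np nn (cball 0 (3 / a * \<bar>x0\<bar>))
     + ennreal (r / (1 - a)\<^sup>2) *
         ((\<integral>\<^sup>+ z. indicator ({z. cmod z \<ge> \<bar>x0\<bar>} \<inter> upper_closed) z * ennreal \<bar>Im (1 / z)\<bar> \<partial>np)
        + (\<integral>\<^sup>+ z. indicator ({z. cmod z \<ge> \<bar>x0\<bar>} \<inter> upper_closed) z * ennreal \<bar>Im (1 / z)\<bar> \<partial>nn))
     + ennreal (r * max 0 (LBINT t = r..a * \<bar>x0\<bar>.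
         enn2real (tv_up np nn (cball (complex_of_real x0) t)) / t\<^sup>2))"
proof -
  define c where "c = complex_of_real x0"
  define disc where "disc M = (\<integral>\<^sup>+ z. indicator upper_closed z * disc_weight c r (a * \<bar>x0\<bar>) z \<partial>M)" for M
  have "bounded J" using J(2) bounded_image_of_real[of "{x0 - r..x0 + r}"] by (auto intro: bounded_subset)
  hence "ennreal (balayage np J + balayage nn J) = ennreal (balayage np J) + ennreal (balayage nn J)"
    using balayage_nonneg[OF np J(1)] balayage_nonneg[OF nn J(1)] by simp
  also have "\<dots> \<le> (\<integral>\<^sup>+ z. interval_majorant x0 r a z \<partial>np) + (\<integral>\<^sup>+ z. interval_majorant x0 r a z \<partial>nn)"
    by (intro add_mono balayage_le_majorant[OF np J r a] balayage_le_majorant[OF nn J r a])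
  also have "\<dots> = tv_up np nn (cball c r)
      + ennreal (2 * r / (a * \<bar>x0\<bar>)) * tv_up np nn (cball 0 (3 / a * \<bar>x0\<bar>))
      + ennreal (r / (1 - a)\<^sup>2) *
         ((\<integral>\<^sup>+ z. indicator ({z. cmod z \<ge> \<bar>x0\<bar>} \<inter> upper_closed) z * ennreal \<bar>Im (1 / z)\<bar> \<partial>np)
        + (\<integral>\<^sup>+ z. indicator ({z. cmod z \<ge> \<bar>x0\<bar>} \<inter> upper_closed) z * ennreal \<bar>Im (1 / z)\<bar> \<partial>nn))
      + ennreal r * (disc np + disc nn)"
    by (simp add: nn_integral_interval_majorant[OF np] nn_integral_interval_majorant[OF nn]
        tv_up_def tv_nu_def disc_def c_def algebra_simps)
  also have "\<dots> \<le> tv_up np nn (cball c r)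
      + ennreal (2 * r / (a * \<bar>x0\<bar>)) * tv_up np nn (cball 0 (3 / a * \<bar>x0\<bar>))
      + ennreal (r / (1 - a)\<^sup>2) *
         ((\<integral>\<^sup>+ z. indicator ({z. cmod z \<ge> \<bar>x0\<bar>} \<inter> upper_closed) z * ennreal \<bar>Im (1 / z)\<bar> \<partial>np)
        + (\<integral>\<^sup>+ z. indicator ({z. cmod z \<ge> \<bar>x0\<bar>} \<inter> upper_closed) z * ennreal \<bar>Im (1 / z)\<bar> \<partial>nn))
      + ennreal r * ennreal (max 0 (LBINT t = r..a * \<bar>x0\<bar>. enn2real (tv_up np nn (cball c t)) / t\<^sup>2))"
    unfolding disc_def by (intro add_left_mono mult_left_mono nn_integral_disc_weight_add_le r) simp
  finally show ?thesis using r by (simp add: c_def ennreal_mult)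
qed

lemma countably_additive_bounded_bal: "countably_additive_bounded (bal np nn)"
  unfolding bal_eq_balayage_diff[abs_def]
  by (intro countably_additive_bounded_diff countably_additive_bounded_balayage np nn)

lemma countably_additive_bounded_balayage_add:
  "countably_additive_bounded (\<lambda>B. balayage np B + balayage nn B)"
  by (intro countably_additive_bounded_add countably_additive_bounded_balayage np nn)

lemma abs_bal_le:
  assumes "B \<in> sets borel" "bounded B"
  shows "\<bar>bal np nn B\<bar> \<le> balayage np B + balayage nn B"
  using balayage_nonneg[OF np assms] balayage_nonneg[OF nn assms] by (simp add: bal_eq_balayage_diff)

lemma tv_setfun_bal_finite:
  assumes "bounded B"
  shows "tv_setfun (bal np nn) B < \<infinity>"
proof -
  have "tv_setfun (bal np nn) B \<le> ereal (balayage np B + balayage nn B)"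
    by (rule tv_setfun_le_dominant[OF countably_additive_bounded_bal countably_additive_bounded_balayage_add
          abs_bal_le assms])
  thus ?thesis by (rule le_less_trans) simp
qed

lemma distR_tv_bal_increment_le:
  assumes t12: "t1 < t2" and same_sign: "t1 * t2 \<ge> 0" and a: "0 < a" "a < 1"
  shows "let x0 = (t1 + t2) / 2; r = (t2 - t1) / 2;
            F = distR (\<lambda>B. real_of_ereal (tv_setfun (bal np nn) B))
        in 0 \<le> F t2 - F t1 \<and>
           ennreal (F t2 - F t1)
             \<le> tv_up np nn (cball (complex_of_real x0) r)
              + ennreal (2 * r / (a * \<bar>x0\<bar>)) * tv_up np nn (cball 0 (3 / a * \<bar>x0\<bar>))
              + ennreal (r / (1 - a)\<^sup>2) *
                  ((\<integral>\<^sup>+ z. indicator ({z. cmod z \<ge> \<bar>x0\<bar>} \<inter> upper_closed) z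
                          * ennreal \<bar>Im (1 / z)\<bar> \<partial>np)
                 + (\<integral>\<^sup>+ z. indicator ({z. cmod z \<ge> \<bar>x0\<bar>} \<inter> upper_closed) z
                          * ennreal \<bar>Im (1 / z)\<bar> \<partial>nn))
              + ennreal (r * max 0 (LBINT t = r..a * \<bar>x0\<bar>.
                    enn2real (tv_up np nn (cball (complex_of_real x0) t)) / t\<^sup>2))"
proof -
  obtain J where J: "J \<in> sets borel" "J \<subseteq> complex_of_real ` {t1..t2}"
    and incr: "0 \<le> distR (\<lambda>B. real_of_ereal (tv_setfun (bal np nn) B)) t2
                 - distR (\<lambda>B. real_of_ereal (tv_setfun (bal np nn) B)) t1"
              "distR (\<lambda>B. real_of_ereal (tv_setfun (bal np nn) B)) t2
                 - distR (\<lambda>B. real_of_ereal (tv_setfun (bal np nn) B)) t1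
               \<le> balayage np J + balayage nn J"
    using distR_tv_setfun_increment[OF countably_additive_bounded_bal countably_additive_bounded_balayage_add
        abs_bal_le t12 same_sign] by blast
  have "(t1 + t2) / 2 - (t2 - t1) / 2 = t1" "(t1 + t2) / 2 + (t2 - t1) / 2 = t2"
    by (simp_all add: field_simps)
  moreover have "\<not> (t1 < 0 \<and> 0 < t2)" using same_sign mult_neg_pos[of t1 t2] by auto
  hence "t2 - t1 \<le> \<bar>t1 + t2\<bar>" using t12 by (auto simp: abs_if)
  hence "(t2 - t1) / 2 \<le> \<bar>(t1 + t2) / 2\<bar>" by simp
  ultimately show ?thesis
    unfolding Let_def using J incr t12 a
    by (intro conjI order_trans[OF ennreal_leI balayage_add_le]) auto
qed

end

theorem theorem1:
  fixes np nn :: "complex measure"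
  assumes charge: "charge_pair np nn"
    and blaschke: "\<exists>r0 > 0.
        (\<integral>\<^sup>+ z. indicator (upper_open - ball 0 r0) z * ennreal (Im (1 / cnj z)) \<partial>np)
      + (\<integral>\<^sup>+ z. indicator (upper_open - ball 0 r0) z * ennreal (Im (1 / cnj z)) \<partial>nn) < \<infinity>"
  shows
    "(\<forall>B \<in> sets borel. bounded B \<longrightarrow>
        integrable np (\<lambda>z. indicator upper_open z * harm z B) \<and>
        integrable nn (\<lambda>z. indicator upper_open z * harm z B))
   \<and> (\<forall>A :: nat \<Rightarrow> complex set. range A \<subseteq> sets borel \<longrightarrow> disjoint_family A \<longrightarrow>
        bounded (\<Union>n. A n) \<longrightarrow> (\<lambda>n. bal np nn (A n)) sums bal np nn (\<Union>n. A n))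
   \<and> (\<forall>B \<in> sets borel. bounded B \<longrightarrow> tv_setfun (bal np nn) B < \<infinity>)
   \<and> (\<forall>t1 t2 a :: real. t1 < t2 \<longrightarrow> t1 * t2 \<ge> 0 \<longrightarrow> 0 < a \<longrightarrow> a < 1 \<longrightarrow>
       (let x0 = (t1 + t2) / 2; r = (t2 - t1) / 2;
            F = distR (\<lambda>B. real_of_ereal (tv_setfun (bal np nn) B))
        in 0 \<le> F t2 - F t1 \<and>
           ennreal (F t2 - F t1)
             \<le> tv_up np nn (cball (complex_of_real x0) r)
              + ennreal (2 * r / (a * \<bar>x0\<bar>)) * tv_up np nn (cball 0 (3 / a * \<bar>x0\<bar>))
              + ennreal (r / (1 - a)\<^sup>2) *
                  ((\<integral>\<^sup>+ z. indicator ({z. cmod z \<ge> \<bar>x0\<bar>} \<inter> upper_closed) z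
                          * ennreal \<bar>Im (1 / z)\<bar> \<partial>np)
                 + (\<integral>\<^sup>+ z. indicator ({z. cmod z \<ge> \<bar>x0\<bar>} \<inter> upper_closed) z
                          * ennreal \<bar>Im (1 / z)\<bar> \<partial>nn))
              + ennreal (r * max 0 (LBINT t = r..a * \<bar>x0\<bar>.
                    enn2real (tv_up np nn (cball (complex_of_real x0) t)) / t\<^sup>2))))"
proof -
  note np = charge_pair_blaschke_measure(1)[OF charge blaschke]
   and nn = charge_pair_blaschke_measure(2)[OF charge blaschke]
  show ?thesis
    using integrable_harm[OF np] integrable_harm[OF nn] tv_setfun_bal_finite[OF np nn]
      countably_additive_boundedD[OF countably_additive_bounded_bal[OF np nn]]
      distR_tv_bal_increment_le[OF np nn]
    by blast
qed

end
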